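(* For each positive integer $n\ge 4$, there exists a family of $n$ digraphs of order $4^n$, each strongly connected and non symmetric, which are pairwise integral strongly quasi-cospectral.
   Context: A sidigraph is a digraph (no loops, at most one arc from $u$ to $v$) with a sign $\pm1$ on each arc; its adjacency matrix has entry $\sigma(v_i,v_j)$ if there is an arc from $v_i$ to $v_j$ and $0$ otherwise, and its spectrum is the multiset of eigenvalues of this matrix. An (unsigned) digraph is identified with the sidigraph having all arcs positive. A sidigraph on a digraph $D$ is a sidigraph whose underlying digraph is $D$. Two (si)digraphs are cospectral if they have the same spectrum. The sign of a cycle is the product of its arc signs; a sidigraph is cycle balanced if every directed cycle is positive. A digraph is symmetric if whenever $(u,v)$ is an arc so is $(v,u)$; it is strongly connected in the usual sense. Two digraphs $D_1,D_2$ are integral strongly quasi-cospectral if $D_1$ and $D_2$ are cospectral with all eigenvalues integers, and there exist non cycle balanced sidigraphs $S_1$ on $D_1$ and $S_2$ on $D_2$ that are cospectral with all eigenvalues integers. *)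

theory Defs
  imports "Jordan_Normal_Form.Char_Poly" "HOL-Computational_Algebra.Polynomial"
begin

definition is_digraph :: "nat \<Rightarrow> (nat \<Rightarrow> nat \<Rightarrow> bool) \<Rightarrow> bool" where
  "is_digraph N arc \<longleftrightarrow> (\<forall>u v. arc u v \<longrightarrow> u < N \<and> v < N \<and> u \<noteq> v)"

definition is_signing :: "(nat \<Rightarrow> nat \<Rightarrow> bool) \<Rightarrow> (nat \<Rightarrow> nat \<Rightarrow> int) \<Rightarrow> bool" where
  "is_signing arc sg \<longleftrightarrow> (\<forall>u v. arc u v \<longrightarrow> sg u v = 1 \<or> sg u v = -1)"

definition adj_mat :: "nat \<Rightarrow> (nat \<Rightarrow> nat \<Rightarrow> bool) \<Rightarrow> (nat \<Rightarrow> nat \<Rightarrow> int) \<Rightarrow> complex mat" where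
  "adj_mat N arc sg = mat N N (\<lambda>(i,j). if arc i j then of_int (sg i j) else 0)"

definition sd_spectrum :: "nat \<Rightarrow> (nat \<Rightarrow> nat \<Rightarrow> bool) \<Rightarrow> (nat \<Rightarrow> nat \<Rightarrow> int) \<Rightarrow> complex multiset" where
  "sd_spectrum N arc sg = proots (char_poly (adj_mat N arc sg))"

definition dg_spectrum :: "nat \<Rightarrow> (nat \<Rightarrow> nat \<Rightarrow> bool) \<Rightarrow> complex multiset" where
  "dg_spectrum N arc = sd_spectrum N arc (\<lambda>_ _. 1)"

definition integral_spectrum :: "complex multiset \<Rightarrow> bool" where
  "integral_spectrum S \<longleftrightarrow> (\<forall>x \<in># S. x \<in> \<int>)"

definition is_dcycle :: "nat \<Rightarrow> (nat \<Rightarrow> nat \<Rightarrow> bool) \<Rightarrow> nat list \<Rightarrow> bool" where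
  "is_dcycle N arc vs \<longleftrightarrow> length vs \<ge> 2 \<and> distinct vs \<and> (\<forall>v\<in>set vs. v < N) \<and>
     (\<forall>i < length vs. arc (vs ! i) (vs ! ((i + 1) mod length vs)))"

definition cycle_sign :: "(nat \<Rightarrow> nat \<Rightarrow> int) \<Rightarrow> nat list \<Rightarrow> int" where
  "cycle_sign sg vs = (\<Prod>i<length vs. sg (vs ! i) (vs ! ((i + 1) mod length vs)))"

definition cycle_balanced :: "nat \<Rightarrow> (nat \<Rightarrow> nat \<Rightarrow> bool) \<Rightarrow> (nat \<Rightarrow> nat \<Rightarrow> int) \<Rightarrow> bool" where
  "cycle_balanced N arc sg \<longleftrightarrow> (\<forall>vs. is_dcycle N arc vs \<longrightarrow> cycle_sign sg vs = 1)"

definition strongly_connected :: "nat \<Rightarrow> (nat \<Rightarrow> nat \<Rightarrow> bool) \<Rightarrow> bool" where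
  "strongly_connected N arc \<longleftrightarrow> (\<forall>u<N. \<forall>v<N. (u, v) \<in> {(x, y). arc x y}\<^sup>*)"

definition symmetric_dg :: "(nat \<Rightarrow> nat \<Rightarrow> bool) \<Rightarrow> bool" where
  "symmetric_dg arc \<longleftrightarrow> (\<forall>u v. arc u v \<longrightarrow> arc v u)"

definition dg_isomorphic :: "nat \<Rightarrow> (nat \<Rightarrow> nat \<Rightarrow> bool) \<Rightarrow> (nat \<Rightarrow> nat \<Rightarrow> bool) \<Rightarrow> bool" where
  "dg_isomorphic N arc1 arc2 \<longleftrightarrow> (\<exists>f. bij_betw f {0..<N} {0..<N} \<and>
     (\<forall>u<N. \<forall>v<N. arc1 u v \<longleftrightarrow> arc2 (f u) (f v)))"

definition integral_strongly_quasi_cospectral ::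
  "nat \<Rightarrow> (nat \<Rightarrow> nat \<Rightarrow> bool) \<Rightarrow> (nat \<Rightarrow> nat \<Rightarrow> bool) \<Rightarrow> bool" where
  "integral_strongly_quasi_cospectral N arc1 arc2 \<longleftrightarrow>
     dg_spectrum N arc1 = dg_spectrum N arc2 \<and> integral_spectrum (dg_spectrum N arc1) \<and>
     (\<exists>sg1 sg2. is_signing arc1 sg1 \<and> is_signing arc2 sg2 \<and>
        \<not> cycle_balanced N arc1 sg1 \<and> \<not> cycle_balanced N arc2 sg2 \<and>
        sd_spectrum N arc1 sg1 = sd_spectrum N arc2 sg2 \<and>
        integral_spectrum (sd_spectrum N arc1 sg1))"

end

theory Submission
  imports Defs
begin

text \<open>In the digraph \<open>qc_arc a p\<close> the out-neighbourhood of a vertex is one of four sets,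
  selected by a vertex type, so its adjacency matrix factors as \<open>XY\<close> through dimension 4,
  and by Sylvester's identity its characteristic polynomial agrees, up to a power of \<open>x\<close>,
  with that of the \<open>4 \<times> 4\<close> matrix \<open>YX\<close> counting neighbours by type. That matrix factors once
  more, and the reversed \<open>3 \<times> 3\<close> product has entries \<open>a^2, 7, 1, 6a\<close> independent of \<open>p\<close>, with
  characteristic polynomial \<open>(x + a)(x + 2a)(x - 3a)\<close>. Negating every arc negates the spectrum
  and makes the triangle \<open>0 \<rightarrow> a^2+7 \<rightarrow> a^2+8 \<rightarrow> 0\<close> negative. For \<open>a = 2^n - 3\<close> the order
  is \<open>4^n\<close>, and the digraphs for \<open>p = 1, \<dots>, n\<close> are told apart by the out-degree \<open>8 + 6a - p\<close>
  of vertex \<open>0\<close>.\<close>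

section \<open>Characteristic polynomials of \<open>XY\<close> and \<open>YX\<close>\<close>

lemma char_poly_zero_mat: "char_poly (0\<^sub>m n n :: 'a::comm_ring_1 mat) = monom 1 n"
proof -
  have "char_poly (0\<^sub>m n n :: 'a mat) = (\<Prod>a\<leftarrow>diag_mat (0\<^sub>m n n). [:- a, 1:])"
    by (rule char_poly_upper_triangular[of _ n]) (auto simp: upper_triangular_def)
  also have "diag_mat (0\<^sub>m n n :: 'a mat) = replicate n 0"
    by (rule nth_equalityI) (auto simp: diag_mat_def)
  also have "(\<Prod>a\<leftarrow>replicate n (0::'a). [:- a, 1:]) = monom 1 n"
    by (simp add: prod_list_replicate monom_altdef)
  finally show ?thesis .
qed

lemma char_poly_four_block_mat_upper_right_zero:
  fixes A :: "'a::idom mat"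
  assumes A: "A \<in> carrier_mat n n" and C: "C \<in> carrier_mat m n" and D: "D \<in> carrier_mat m m"
  shows "char_poly (four_block_mat A (0\<^sub>m n m) C D) = char_poly A * char_poly D"
proof -
  let ?cm = "\<lambda>A. [:0, 1:] \<cdot>\<^sub>m 1\<^sub>m (dim_row A) + map_mat (\<lambda>a. [:- a:]) A"
  have "char_poly (four_block_mat A (0\<^sub>m n m) C D) = det (?cm (four_block_mat A (0\<^sub>m n m) C D))"
    unfolding char_poly_defs by simp
  also have "?cm (four_block_mat A (0\<^sub>m n m) C D)
      = four_block_mat (?cm A) (0\<^sub>m n m) (map_mat (\<lambda>a. [:- a:]) C) (?cm D)"
    using A C D by (auto intro!: eq_matI simp: one_poly_def)
  also have "det \<dots> = det (?cm A) * det (?cm D)"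
    using A C D by (intro det_four_block_mat_upper_right_zero[OF _ refl]) auto
  also have "\<dots> = char_poly A * char_poly D" unfolding char_poly_defs ..
  finally show ?thesis .
qed

text \<open>\<open>[[XY, 0], [Y, 0]]\<close> and \<open>[[0, 0], [Y, YX]]\<close> are conjugate
  by \<open>[[1, X], [0, 1]]\<close>.\<close>

lemma char_poly_mult_commute:
  fixes X :: "'a::idom mat"
  assumes X: "X \<in> carrier_mat n k" and Y: "Y \<in> carrier_mat k n"
  shows "monom 1 k * char_poly (X * Y) = monom 1 n * char_poly (Y * X)"
proof -
  define P where "P = four_block_mat (1\<^sub>m n) X (0\<^sub>m k n) (1\<^sub>m k)"
  define Q where "Q = four_block_mat (1\<^sub>m n) (-X) (0\<^sub>m k n) (1\<^sub>m k)"
  define M1 where "M1 = four_block_mat (X * Y) (0\<^sub>m n k) Y (0\<^sub>m k k)"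
  define M2 where "M2 = four_block_mat (0\<^sub>m n n) (0\<^sub>m n k) Y (Y * X)"
  have XY: "X * Y \<in> carrier_mat n n" and YX: "Y * X \<in> carrier_mat k k" using X Y by auto
  have P: "P \<in> carrier_mat (n+k) (n+k)" and Q: "Q \<in> carrier_mat (n+k) (n+k)"
    and M1: "M1 \<in> carrier_mat (n+k) (n+k)" and M2: "M2 \<in> carrier_mat (n+k) (n+k)"
    unfolding P_def Q_def M1_def M2_def using X XY YX by auto
  have PQ: "P * Q = 1\<^sub>m (n+k)" unfolding P_def Q_def
    by (subst mult_four_block_mat[of _ n n _ k _ k], insert X, auto intro!: eq_matI)
  have QP: "Q * P = 1\<^sub>m (n+k)" unfolding P_def Q_def
    by (subst mult_four_block_mat[of _ n n _ k _ k], insert X, auto intro!: eq_matI)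
  have "P * M2 = four_block_mat (X * Y) (X * (Y * X)) Y (Y * X)" unfolding P_def M2_def
    by (subst mult_four_block_mat[of _ n n _ k _ k], insert X Y, auto)
  also have "\<dots> = M1 * P" unfolding P_def M1_def
    by (subst mult_four_block_mat[of _ n n _ k _ k], insert X Y, auto simp: assoc_mult_mat[OF X Y X])
  finally have "M1 = P * M2 * Q"
    using assoc_mult_mat[OF M1 P Q] right_mult_one_mat[OF M1] PQ by simp
  hence "similar_mat M1 M2" using P Q M1 M2 by (intro similar_matI[OF _ PQ QP]) auto
  hence "char_poly M1 = char_poly M2" by (rule char_poly_similar)
  moreover have "char_poly M1 = char_poly (X * Y) * monom 1 k"
    unfolding M1_def by (subst char_poly_four_block_mat_upper_right_zero[OF XY Y])
      (auto simp: char_poly_zero_mat)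
  moreover have "char_poly M2 = monom 1 n * char_poly (Y * X)"
    unfolding M2_def by (subst char_poly_four_block_mat_upper_right_zero[OF _ Y YX])
      (auto simp: char_poly_zero_mat)
  ultimately show ?thesis by (simp add: mult.commute)
qed

section \<open>Digraphs whose out-neighbourhoods depend only on a vertex type\<close>

definition type_mat :: "nat \<Rightarrow> nat \<Rightarrow> (nat \<Rightarrow> nat) \<Rightarrow> complex mat" where
  "type_mat N k ty = mat N k (\<lambda>(u, b). if ty u = b then 1 else 0)"

definition nbhd_mat :: "nat \<Rightarrow> nat \<Rightarrow> (nat \<Rightarrow> nat \<Rightarrow> bool) \<Rightarrow> int \<Rightarrow> complex mat" where
  "nbhd_mat k N nb s = mat k N (\<lambda>(b, v). if nb b v then of_int s else 0)"

definition type_quotient_mat ::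
  "nat \<Rightarrow> nat \<Rightarrow> (nat \<Rightarrow> nat) \<Rightarrow> (nat \<Rightarrow> nat \<Rightarrow> bool) \<Rightarrow> int \<Rightarrow> complex mat" where
  "type_quotient_mat N k ty nb s =
     mat k k (\<lambda>(b, c). of_int s * of_nat (card {v \<in> {0..<N}. nb b v \<and> ty v = c}))"

lemma adj_mat_eq_type_mat_mult_nbhd_mat:
  assumes ty_lt: "\<And>u. u < N \<Longrightarrow> ty u < k"
    and arc_iff: "\<And>u v. u < N \<Longrightarrow> v < N \<Longrightarrow> arc u v \<longleftrightarrow> nb (ty u) v"
  shows "adj_mat N arc (\<lambda>_ _. s) = type_mat N k ty * nbhd_mat k N nb s"
proof (rule eq_matI)
  fix u v assume "u < dim_row (type_mat N k ty * nbhd_mat k N nb s)"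
    and "v < dim_col (type_mat N k ty * nbhd_mat k N nb s)"
  hence u: "u < N" and v: "v < N" by (auto simp: type_mat_def nbhd_mat_def)
  have "(type_mat N k ty * nbhd_mat k N nb s) $$ (u, v)
      = (\<Sum>b\<in>{0..<k}. (if ty u = b then 1 else 0) * (if nb b v then of_int s else 0))"
    using u v by (simp add: type_mat_def nbhd_mat_def scalar_prod_def)
  also have "\<dots> = (\<Sum>b\<in>{0..<k}. if ty u = b then (if nb b v then of_int s else 0) else 0)"
    by (rule sum.cong) auto
  also have "\<dots> = (if nb (ty u) v then of_int s else 0)"
    using ty_lt[OF u] by (simp add: sum.delta')
  finally show "adj_mat N arc (\<lambda>_ _. s) $$ (u, v) = (type_mat N k ty * nbhd_mat k N nb s) $$ (u, v)"
    using u v arc_iff[OF u v] by (simp add: adj_mat_def)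
qed (auto simp: adj_mat_def type_mat_def nbhd_mat_def)

lemma nbhd_mat_mult_type_mat:
  "nbhd_mat k N nb s * type_mat N k ty = type_quotient_mat N k ty nb s"
proof (rule eq_matI)
  fix b c assume "b < dim_row (type_quotient_mat N k ty nb s)"
    and "c < dim_col (type_quotient_mat N k ty nb s)"
  hence b: "b < k" and c: "c < k" by (auto simp: type_quotient_mat_def)
  have "(nbhd_mat k N nb s * type_mat N k ty) $$ (b, c)
      = (\<Sum>v\<in>{0..<N}. (if nb b v then of_int s else 0) * (if ty v = c then 1 else 0))"
    using b c by (simp add: type_mat_def nbhd_mat_def scalar_prod_def)
  also have "\<dots> = (\<Sum>v\<in>{0..<N}. if nb b v \<and> ty v = c then of_int s else 0)"
    by (rule sum.cong) auto
  also have "\<dots> = (\<Sum>v\<in>{v \<in> {0..<N}. nb b v \<and> ty v = c}. of_int s)"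
    by (subst sum.inter_filter) auto
  finally show "(nbhd_mat k N nb s * type_mat N k ty) $$ (b, c) = type_quotient_mat N k ty nb s $$ (b, c)"
    using b c by (simp add: type_quotient_mat_def)
qed (auto simp: type_quotient_mat_def type_mat_def nbhd_mat_def)

lemma char_poly_adj_mat_type_quotient:
  assumes "\<And>u. u < N \<Longrightarrow> ty u < k"
    and "\<And>u v. u < N \<Longrightarrow> v < N \<Longrightarrow> arc u v \<longleftrightarrow> nb (ty u) v"
  shows "monom 1 k * char_poly (adj_mat N arc (\<lambda>_ _. s))
    = monom 1 N * char_poly (type_quotient_mat N k ty nb s)"
proof -
  have "adj_mat N arc (\<lambda>_ _. s) = type_mat N k ty * nbhd_mat k N nb s"
    using assms by (rule adj_mat_eq_type_mat_mult_nbhd_mat)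
  then show ?thesis unfolding nbhd_mat_mult_type_mat[symmetric]
    by (auto intro!: char_poly_mult_commute simp: type_mat_def nbhd_mat_def)
qed

section \<open>The family and its spectrum\<close>

text \<open>The vertices \<open>0..<(a+3)^2\<close> split into consecutive blocks
  \<open>C = [0, a^2)\<close>, \<open>X = [a^2, a^2+7)\<close>, \<open>y = a^2+7\<close>, \<open>Z = [a^2+8, a^2+8+p)\<close>,
  \<open>Y = [a^2+8+p, a^2+6a+8)\<close>, \<open>z = a^2+6a+8\<close>. The out-neighbourhood of a vertex depends only
  on its type: type 1 (the block \<open>C\<close>) sees \<open>X \<union> {y} \<union> Y\<close>, type 2 (\<open>y\<close>) sees \<open>Z\<close>,
  type 3 (\<open>Y\<close>) sees \<open>z\<close>, and type 0 (\<open>X\<close>, \<open>Z\<close>, \<open>z\<close>) sees \<open>C\<close>.\<close>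

definition qc_order :: "nat \<Rightarrow> nat" where
  "qc_order a = a*a + 6*a + 9"

definition qc_type :: "nat \<Rightarrow> nat \<Rightarrow> nat \<Rightarrow> nat" where
  "qc_type a p u = (if u < a*a then 1 else if u = a*a + 7 then 2
     else if u \<in> {a*a+8+p..<a*a+6*a+8} then 3 else 0)"

definition qc_nbhd :: "nat \<Rightarrow> nat \<Rightarrow> nat \<Rightarrow> nat \<Rightarrow> bool" where
  "qc_nbhd a p b v \<longleftrightarrow>
     (b = 0 \<and> v < a*a) \<or>
     (b = 1 \<and> v \<in> {a*a..<a*a+8} \<union> {a*a+8+p..<a*a+6*a+8}) \<or>
     (b = 2 \<and> v \<in> {a*a+8..<a*a+8+p}) \<or>
     (b = 3 \<and> v = a*a+6*a+8)"

definition qc_arc :: "nat \<Rightarrow> nat \<Rightarrow> nat \<Rightarrow> nat \<Rightarrow> bool" where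
  "qc_arc a p u v \<longleftrightarrow> u < qc_order a \<and> qc_nbhd a p (qc_type a p u) v"

lemmas qc_defs = qc_order_def qc_type_def qc_nbhd_def qc_arc_def

lemma qc_type_less: "qc_type a p u < 4"
  by (simp add: qc_type_def)

definition qc_counts :: "nat \<Rightarrow> nat \<Rightarrow> nat list list" where
  "qc_counts a p = [[0, a*a, 0, 0], [7, 0, 1, 6*a - p], [p, 0, 0, 0], [1, 0, 0, 0]]"

lemma card_qc_nbhd_type:
  assumes "p \<le> 6*a" "b < 4" "c < 4"
  shows "card {v \<in> {0..<qc_order a}. qc_nbhd a p b v \<and> qc_type a p v = c} = qc_counts a p ! b ! c"
proof -
  let ?S = "\<lambda>b c. {v \<in> {0..<qc_order a}. qc_nbhd a p b v \<and> qc_type a p v = c}"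
  have "b = 0 \<or> b = 1 \<or> b = 2 \<or> b = 3" "c = 0 \<or> c = 1 \<or> c = 2 \<or> c = 3" using assms by auto
  moreover have "?S 0 1 = {0..<a*a}" "?S 1 0 = {a*a..<a*a+7}" "?S 1 2 = {a*a+7}"
    "?S 1 3 = {a*a+8+p..<a*a+6*a+8}" "?S 2 0 = {a*a+8..<a*a+8+p}" "?S 3 0 = {a*a+6*a+8}"
    using assms(1) by (auto simp: qc_defs)
  moreover have "?S 0 0 = {}" "?S 0 2 = {}" "?S 0 3 = {}" "?S 1 1 = {}"
    "?S 2 1 = {}" "?S 2 2 = {}" "?S 2 3 = {}" "?S 3 1 = {}" "?S 3 2 = {}" "?S 3 3 = {}"
    by (auto simp: qc_defs)
  ultimately show ?thesis by (elim disjE) (simp_all add: qc_counts_def)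
qed

text \<open>The quotient matrix factors through \<open>3 \<times> 3\<close>, and the reversed product no longer
  depends on \<open>p\<close>: the parameter only moves vertices between \<open>Z\<close> and \<open>Y\<close>.\<close>

definition qc_left :: "nat \<Rightarrow> nat \<Rightarrow> complex mat" where
  "qc_left a p = mat_of_rows_list 3 [[0, of_nat (a*a), 0], [7, 0, 1], [of_nat p, 0, 0], [1, 0, 0]]"

definition qc_right :: "nat \<Rightarrow> nat \<Rightarrow> int \<Rightarrow> complex mat" where
  "qc_right a p s = mat_of_rows_list 4
     [[of_int s, 0, 0, 0], [0, of_int s, 0, 0], [0, 0, of_int s, of_int s * of_nat (6*a - p)]]"

definition qc_core :: "nat \<Rightarrow> int \<Rightarrow> complex mat" where
  "qc_core a s = mat_of_rows_list 3
     [[0, of_int s * of_nat (a*a), 0], [of_int s * 7, 0, of_int s], [of_int s * of_nat (6*a), 0, 0]]"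

lemma sum_atLeast0_lessThan_3: "(\<Sum>k\<in>{0..<3::nat}. f k) = f 0 + f 1 + (f 2 :: 'a::comm_monoid_add)"
  by (simp add: eval_nat_numeral atLeast0_lessThan_Suc add.commute add.left_commute)

lemma sum_atLeast0_lessThan_4: "(\<Sum>k\<in>{0..<4::nat}. f k) = f 0 + f 1 + f 2 + (f 3 :: 'a::comm_monoid_add)"
  by (simp add: eval_nat_numeral atLeast0_lessThan_Suc add.commute add.left_commute)

lemma qc_type_quotient_eq:
  assumes "p \<le> 6*a"
  shows "type_quotient_mat (qc_order a) 4 (qc_type a p) (qc_nbhd a p) s = qc_left a p * qc_right a p s"
proof (rule eq_matI)
  fix b c assume "b < dim_row (qc_left a p * qc_right a p s)" "c < dim_col (qc_left a p * qc_right a p s)"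
  hence b: "b < 4" and c: "c < 4" by (auto simp: qc_left_def qc_right_def mat_of_rows_list_def)
  have "type_quotient_mat (qc_order a) 4 (qc_type a p) (qc_nbhd a p) s $$ (b, c)
      = of_int s * of_nat (card {v \<in> {0..<qc_order a}. qc_nbhd a p b v \<and> qc_type a p v = c})"
    using b c by (simp add: type_quotient_mat_def)
  also have "\<dots> = of_int s * of_nat (qc_counts a p ! b ! c)"
    by (simp only: card_qc_nbhd_type[OF assms b c])
  also have "\<dots> = (qc_left a p * qc_right a p s) $$ (b, c)"
  proof -
    have "b = 0 \<or> b = 1 \<or> b = 2 \<or> b = 3" "c = 0 \<or> c = 1 \<or> c = 2 \<or> c = 3" using b c by auto
    then show ?thesis
      using assms by (elim disjE) (simp_all add: qc_counts_def qc_left_def qc_right_def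
          mat_of_rows_list_def scalar_prod_def sum_atLeast0_lessThan_3 of_nat_diff)
  qed
  finally show "type_quotient_mat (qc_order a) 4 (qc_type a p) (qc_nbhd a p) s $$ (b, c)
      = (qc_left a p * qc_right a p s) $$ (b, c)" .
qed (auto simp: type_quotient_mat_def qc_left_def qc_right_def mat_of_rows_list_def)

lemma qc_right_mult_left:
  assumes "p \<le> 6*a"
  shows "qc_right a p s * qc_left a p = qc_core a s"
proof (rule eq_matI)
  fix b c assume "b < dim_row (qc_core a s)" "c < dim_col (qc_core a s)"
  hence "b = 0 \<or> b = 1 \<or> b = 2" "c = 0 \<or> c = 1 \<or> c = 2" by (auto simp: qc_core_def mat_of_rows_list_def)
  then show "(qc_right a p s * qc_left a p) $$ (b, c) = qc_core a s $$ (b, c)"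
    using assms by (elim disjE) (simp_all add: qc_core_def qc_left_def qc_right_def mat_of_rows_list_def
        scalar_prod_def sum_atLeast0_lessThan_4 algebra_simps of_nat_diff)
qed (auto simp: qc_core_def qc_left_def qc_right_def mat_of_rows_list_def)

lemma char_poly_qc_adj_mat:
  assumes "p \<le> 6*a"
  shows "monom 1 7 * char_poly (adj_mat (qc_order a) (qc_arc a p) (\<lambda>_ _. s))
    = monom 1 (qc_order a + 4) * char_poly (qc_core a s)"
proof -
  let ?A = "adj_mat (qc_order a) (qc_arc a p) (\<lambda>_ _. s)"
  let ?Q = "type_quotient_mat (qc_order a) 4 (qc_type a p) (qc_nbhd a p) s"
  have A_Q: "monom 1 4 * char_poly ?A = monom 1 (qc_order a) * char_poly ?Q"
    by (rule char_poly_adj_mat_type_quotient) (auto simp: qc_arc_def qc_type_less)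
  have Q_core: "monom 1 3 * char_poly ?Q = monom 1 4 * char_poly (qc_core a s)"
    unfolding qc_type_quotient_eq[OF assms] qc_right_mult_left[OF assms, symmetric]
    by (rule char_poly_mult_commute) (auto simp: qc_left_def qc_right_def mat_of_rows_list_def)
  have "monom 1 7 * char_poly ?A = monom 1 3 * (monom 1 4 * char_poly ?A)"
    by (simp add: mult_monom mult.assoc[symmetric])
  also have "\<dots> = monom 1 (qc_order a) * (monom 1 3 * char_poly ?Q)"
    unfolding A_Q by (simp add: ac_simps)
  also have "\<dots> = monom 1 (qc_order a + 4) * char_poly (qc_core a s)"
    unfolding Q_core by (simp add: mult_monom mult.assoc[symmetric])
  finally show ?thesis .
qed

lemma char_poly_qc_adj_mat_eq:
  assumes "p \<le> 6*a" "p' \<le> 6*a"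
  shows "char_poly (adj_mat (qc_order a) (qc_arc a p) (\<lambda>_ _. s))
    = char_poly (adj_mat (qc_order a) (qc_arc a p') (\<lambda>_ _. s))"
  using char_poly_qc_adj_mat[OF assms(1), of s] char_poly_qc_adj_mat[OF assms(2), of s]
  by (metis mult_cancel_left monom_eq_0_iff one_neq_zero)

lemma eigenvalue_qc_core:
  assumes "a \<noteq> 0" "s = 1 \<or> s = -1" "eigenvalue (qc_core a s) x"
  shows "x = - of_int s * of_nat a \<or> x = - 2 * of_int s * of_nat a \<or> x = 3 * of_int s * of_nat a"
proof -
  define S :: complex where "S = of_int s"
  define A :: complex where "A = of_nat a"
  have S2: "S * S = 1" and A: "A \<noteq> 0" using assms(1,2) by (auto simp: S_def A_def)
  have "qc_core a s \<in> carrier_mat 3 3" by (simp add: qc_core_def mat_of_rows_list_def numeral_3_eq_3)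
  moreover obtain v where "eigenvector (qc_core a s) v x" using assms(3) unfolding eigenvalue_def by blast
  ultimately have v: "v \<in> carrier_vec 3" "v \<noteq> 0\<^sub>v 3" and eq: "qc_core a s *\<^sub>v v = x \<cdot>\<^sub>v v"
    unfolding eigenvector_def by auto
  have row: "(qc_core a s *\<^sub>v v) $ i = (x \<cdot>\<^sub>v v) $ i" for i using eq by simp
  have e0: "S * A * A * v$1 = x * v$0" and e1: "S * (7 * v$0 + v$2) = x * v$1"
    and e2: "S * 6 * A * v$0 = x * v$2"
    using row[of 0] row[of 1] row[of 2] v(1) by (auto simp: qc_core_def mat_of_rows_list_def
        scalar_prod_def sum_atLeast0_lessThan_3 S_def A_def algebra_simps)
  have "v$0 \<noteq> 0"
  proof
    assume "v$0 = 0"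
    moreover have "S \<noteq> 0" using S2 by auto
    ultimately have "v$1 = 0" "v$2 = 0" using e0 e1 A by auto
    with \<open>v$0 = 0\<close> have "v = 0\<^sub>v 3"
      using v(1) by (intro eq_vecI) (auto simp: less_Suc_eq numeral_2_eq_2 numeral_3_eq_3)
    with v(2) show False ..
  qed
  txt \<open>The characteristic polynomial of \<open>qc_core a s\<close>, as a combination of the eigen-equations
    (using \<open>S^2 = 1\<close>).\<close>
  have "(x + S * A) * (x + 2 * S * A) * (x - 3 * S * A) * v$0
      = x^2 * (x * v$0 - S * A * A * v$1) + S * A * A * x * (x * v$1 - S * (7 * v$0 + v$2))
        + A * A * (x * v$2 - S * 6 * A * v$0) + (S * S - 1) * (A * A * x * v$2 - 6 * S * A * A * A * v$0)"
    by (simp add: algebra_simps power2_eq_square)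
  also have "\<dots> = 0" by (simp only: e0 e1 e2 S2) simp
  finally have "(x + S * A) * (x + 2 * S * A) * (x - 3 * S * A) = 0" using \<open>v$0 \<noteq> 0\<close> by simp
  hence "x + S * A = 0 \<or> x + 2 * S * A = 0 \<or> x - 3 * S * A = 0" by simp
  then show ?thesis unfolding S_def A_def by (auto simp: add_eq_0_iff2)
qed

lemma integral_spectrum_qc:
  assumes "a \<noteq> 0" "p \<le> 6*a" "s = 1 \<or> s = -1"
  shows "integral_spectrum (sd_spectrum (qc_order a) (qc_arc a p) (\<lambda>_ _. s))"
  unfolding integral_spectrum_def sd_spectrum_def
proof
  let ?A = "adj_mat (qc_order a) (qc_arc a p) (\<lambda>_ _. s)"
  fix x assume x: "x \<in># proots (char_poly ?A)"
  have "char_poly ?A \<noteq> 0"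
    using degree_monic_char_poly[of ?A "qc_order a"] by (auto simp: adj_mat_def)
  with x have "poly (monom 1 7 * char_poly ?A) x = 0" by simp
  hence "x = 0 \<or> poly (char_poly (qc_core a s)) x = 0"
    unfolding char_poly_qc_adj_mat[OF assms(2)] by (simp add: poly_monom)
  then show "x \<in> \<int>"
  proof
    assume "poly (char_poly (qc_core a s)) x = 0"
    hence "eigenvalue (qc_core a s) x"
      by (subst eigenvalue_root_char_poly[of _ 3]) (auto simp: qc_core_def mat_of_rows_list_def)
    hence "x = - of_int s * of_nat a \<or> x = - 2 * of_int s * of_nat a \<or> x = 3 * of_int s * of_nat a"
      by (rule eigenvalue_qc_core[OF assms(1,3)])
    then show ?thesis by (elim disjE) (auto intro!: Ints_mult Ints_minus)
  qed simp
qed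

section \<open>Combinatorial properties of the family\<close>

lemma qc_is_digraph:
  assumes "p \<le> 6*a"
  shows "is_digraph (qc_order a) (qc_arc a p)"
  using assms by (auto simp: is_digraph_def qc_defs split: if_splits)

lemma qc_not_symmetric:
  assumes "0 < a"
  shows "\<not> symmetric_dg (qc_arc a p)"
proof -
  have "qc_arc a p 0 (a*a+7)" "\<not> qc_arc a p (a*a+7) 0" using assms by (auto simp: qc_defs)
  then show ?thesis unfolding symmetric_dg_def by blast
qed

lemma qc_not_cycle_balanced:
  assumes "1 \<le> p" "p \<le> 6*a"
  shows "\<not> cycle_balanced (qc_order a) (qc_arc a p) (\<lambda>_ _. -1)"
proof -
  let ?vs = "[0, a*a+7, a*a+8]"
  have arcs: "qc_arc a p 0 (a*a+7)" "qc_arc a p (a*a+7) (a*a+8)" "qc_arc a p (a*a+8) 0"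
    using assms by (auto simp: qc_defs)
  have "qc_arc a p (?vs ! i) (?vs ! ((i + 1) mod length ?vs))" if "i < length ?vs" for i
  proof -
    have "i = 0 \<or> i = 1 \<or> i = 2" using that by auto
    then show ?thesis using arcs by auto
  qed
  hence "is_dcycle (qc_order a) (qc_arc a p) ?vs"
    unfolding is_dcycle_def by (auto simp: qc_order_def)
  moreover have "cycle_sign (\<lambda>_ _. -1) ?vs = -1" by (simp add: cycle_sign_def)
  ultimately show ?thesis unfolding cycle_balanced_def by force
qed

lemma qc_vertex_cases:
  assumes "u < qc_order a" "p \<le> 6*a"
  obtains "u < a*a" | "u \<in> {a*a..<a*a+7}" | "u = a*a+7" | "u \<in> {a*a+8..<a*a+8+p}"
    | "u \<in> {a*a+8+p..<a*a+6*a+8}" | "u = a*a+6*a+8"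
proof -
  have "u < a*a \<or> u \<in> {a*a..<a*a+7} \<or> u = a*a+7 \<or> u \<in> {a*a+8..<a*a+8+p}
    \<or> u \<in> {a*a+8+p..<a*a+6*a+8} \<or> u = a*a+6*a+8"
    using assms unfolding qc_order_def by auto
  then show ?thesis using that by blast
qed

text \<open>Every vertex reaches \<open>0\<close> and is reached from \<open>0\<close> in at most two steps.\<close>

lemma qc_strongly_connected:
  assumes "1 \<le> p" "p < 6*a"
  shows "strongly_connected (qc_order a) (qc_arc a p)"
proof -
  let ?R = "{(u, v). qc_arc a p u v}"
  have p: "p \<le> 6*a" using assms(2) by simp
  have arc: "(u, v) \<in> ?R\<^sup>*" if "qc_arc a p u v" for u v
    using that by auto
  have arc2: "(u, v) \<in> ?R\<^sup>*" if "qc_arc a p u w" "qc_arc a p w v" for u v w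
    using that by (auto intro: converse_rtrancl_into_rtrancl)
  have to_0: "(u, 0) \<in> ?R\<^sup>*" if "u < qc_order a" for u
    using that p
  proof (cases rule: qc_vertex_cases)
    case 1 then show ?thesis using assms by (intro arc2[of _ "a*a"]) (auto simp: qc_defs)
  next
    case 3 then show ?thesis using assms by (intro arc2[of _ "a*a+8"]) (auto simp: qc_defs)
  next
    case 5 then show ?thesis using assms by (intro arc2[of _ "a*a+6*a+8"]) (auto simp: qc_defs)
  qed (intro arc, use assms in \<open>auto simp: qc_defs\<close>)+
  have from_0: "(0, v) \<in> ?R\<^sup>*" if "v < qc_order a" for v
    using that p
  proof (cases rule: qc_vertex_cases)
    case 1 then show ?thesis using assms by (intro arc2[of _ "a*a"]) (auto simp: qc_defs)
  next
    case 4 then show ?thesis using assms by (intro arc2[of _ "a*a+7"]) (auto simp: qc_defs)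
  next
    case 6 then show ?thesis using assms by (intro arc2[of _ "a*a+8+p"]) (auto simp: qc_defs)
  qed (intro arc, use assms in \<open>auto simp: qc_defs\<close>)+
  show ?thesis
    unfolding strongly_connected_def using to_0 from_0 by (meson rtrancl_trans)
qed

definition out_degree :: "nat \<Rightarrow> (nat \<Rightarrow> nat \<Rightarrow> bool) \<Rightarrow> nat \<Rightarrow> nat" where
  "out_degree N arc u = card {v \<in> {0..<N}. arc u v}"

lemma dg_isomorphic_out_degree:
  assumes "dg_isomorphic N arc1 arc2" "u < N"
  shows "\<exists>u' < N. out_degree N arc2 u' = out_degree N arc1 u"
proof -
  obtain f where f: "bij_betw f {0..<N} {0..<N}" and iso: "\<forall>u<N. \<forall>v<N. arc1 u v \<longleftrightarrow> arc2 (f u) (f v)"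
    using assms(1) unfolding dg_isomorphic_def by blast
  have "f ` {v \<in> {0..<N}. arc1 u v} = {w \<in> f ` {0..<N}. arc2 (f u) w}"
    using iso assms(2) by auto
  also have "\<dots> = {w \<in> {0..<N}. arc2 (f u) w}"
    using f by (simp add: bij_betw_def)
  finally have "card {w \<in> {0..<N}. arc2 (f u) w} = card {v \<in> {0..<N}. arc1 u v}"
    using bij_betw_imp_inj_on[OF f] by (metis (no_types, lifting) card_image inj_on_subset mem_Collect_eq subsetI)
  moreover have "f u < N" using f assms(2) by (auto dest: bij_betw_apply)
  ultimately show ?thesis unfolding out_degree_def by blast
qed

lemma out_degree_qc:
  assumes "p \<le> 6*a" "u < qc_order a"
  shows "out_degree (qc_order a) (qc_arc a p) u = [a*a, 8 + 6*a - p, p, 1] ! qc_type a p u"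
proof -
  let ?O = "\<lambda>b. {v \<in> {0..<qc_order a}. qc_nbhd a p b v}"
  have "?O 0 = {0..<a*a}" "?O 1 = {a*a..<a*a+8} \<union> {a*a+8+p..<a*a+6*a+8}"
    "?O 2 = {a*a+8..<a*a+8+p}" "?O 3 = {a*a+6*a+8}"
    using assms(1) by (auto simp: qc_defs)
  moreover have "card ({a*a..<a*a+8} \<union> {a*a+8+p..<a*a+6*a+8}) = 8 + (6*a - p)"
    by (subst card_Un_disjoint) auto
  moreover have "qc_type a p u = 0 \<or> qc_type a p u = 1 \<or> qc_type a p u = 2 \<or> qc_type a p u = 3"
    using qc_type_less[of a p u] by auto
  ultimately show ?thesis
    using assms unfolding out_degree_def qc_arc_def by (elim disjE) auto
qed

lemma qc_not_isomorphic:
  assumes "8 \<le> a" "p \<noteq> p'" "p + p' \<le> 6*a"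
  shows "\<not> dg_isomorphic (qc_order a) (qc_arc a p) (qc_arc a p')"
proof
  assume iso: "dg_isomorphic (qc_order a) (qc_arc a p) (qc_arc a p')"
  have "0 < qc_order a" by (simp add: qc_order_def)
  with iso obtain u' where u': "u' < qc_order a"
    "out_degree (qc_order a) (qc_arc a p') u' = out_degree (qc_order a) (qc_arc a p) 0"
    using dg_isomorphic_out_degree by blast
  have "qc_type a p 0 = 1" using assms(1) by (simp add: qc_type_def)
  hence "out_degree (qc_order a) (qc_arc a p) 0 = 8 + 6*a - p"
    using out_degree_qc[of p a 0] assms by (simp add: qc_order_def)
  moreover have "out_degree (qc_order a) (qc_arc a p') u' \<in> set [a*a, 8 + 6*a - p', p', 1]"
  proof -
    have "out_degree (qc_order a) (qc_arc a p') u' = [a*a, 8 + 6*a - p', p', 1] ! qc_type a p' u'"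
      using assms u'(1) by (intro out_degree_qc) auto
    also have "\<dots> \<in> set [a*a, 8 + 6*a - p', p', 1]"
      using qc_type_less[of a p' u'] by (intro nth_mem) simp
    finally show ?thesis .
  qed
  ultimately have "8 + 6*a - p \<in> set [a*a, 8 + 6*a - p', p', 1]" using u'(2) by metis
  moreover have "8*a \<le> a*a" using assms(1) by simp
  ultimately show False using assms by (simp only: set_simps insert_iff empty_iff) arith
qed

lemma qc_integral_strongly_quasi_cospectral:
  assumes "1 \<le> p" "p \<le> 6*a" "1 \<le> p'" "p' \<le> 6*a"
  shows "integral_strongly_quasi_cospectral (qc_order a) (qc_arc a p) (qc_arc a p')"
  unfolding integral_strongly_quasi_cospectral_def dg_spectrum_def
proof (intro conjI exI[of _ "\<lambda>_ _. -1"])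
  have "a \<noteq> 0" using assms by auto
  show "sd_spectrum (qc_order a) (qc_arc a p) (\<lambda>_ _. 1) = sd_spectrum (qc_order a) (qc_arc a p') (\<lambda>_ _. 1)"
    "sd_spectrum (qc_order a) (qc_arc a p) (\<lambda>_ _. -1) = sd_spectrum (qc_order a) (qc_arc a p') (\<lambda>_ _. -1)"
    unfolding sd_spectrum_def using char_poly_qc_adj_mat_eq[OF assms(2,4)] by simp_all
  show "integral_spectrum (sd_spectrum (qc_order a) (qc_arc a p) (\<lambda>_ _. 1))"
    "integral_spectrum (sd_spectrum (qc_order a) (qc_arc a p) (\<lambda>_ _. -1))"
    using integral_spectrum_qc[OF \<open>a \<noteq> 0\<close> assms(2)] by simp_all
  show "is_signing (qc_arc a p) (\<lambda>_ _. -1)" "is_signing (qc_arc a p') (\<lambda>_ _. -1)"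
    by (simp_all add: is_signing_def)
  show "\<not> cycle_balanced (qc_order a) (qc_arc a p) (\<lambda>_ _. -1)"
    "\<not> cycle_balanced (qc_order a) (qc_arc a p') (\<lambda>_ _. -1)"
    using qc_not_cycle_balanced assms by simp_all
qed

theorem theorem2p15:
  fixes n :: nat
  assumes "n \<ge> 4"
  shows "\<exists>D :: nat \<Rightarrow> (nat \<Rightarrow> nat \<Rightarrow> bool).
     (\<forall>i<n. is_digraph (4 ^ n) (D i) \<and> strongly_connected (4 ^ n) (D i) \<and> \<not> symmetric_dg (D i)) \<and>
     (\<forall>i<n. \<forall>j<n. i \<noteq> j \<longrightarrow> \<not> dg_isomorphic (4 ^ n) (D i) (D j) \<and>
        integral_strongly_quasi_cospectral (4 ^ n) (D i) (D j))"
proof -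
  define a :: nat where "a = 2^n - 3"
  have "(2::nat)^4 \<le> 2^n" using assms by (intro power_increasing) auto
  hence a: "2^n = a + 3" "8 \<le> a" unfolding a_def by auto
  have "(4::nat)^n = 2^n * 2^n" by (simp add: power_mult_distrib[symmetric])
  hence N: "4^n = qc_order a" unfolding a qc_order_def by (simp add: algebra_simps)
  have "n < 2^n" by (rule less_exp)
  hence p: "1 \<le> i + 1" "i + 1 < 6*a" "(i + 1) + (j + 1) \<le> 6*a" if "i < n" "j < n" for i j
    using that a by linarith+
  show ?thesis unfolding N
  proof (intro exI[of _ "\<lambda>i. qc_arc a (i + 1)"] conjI allI impI)
    fix i assume "i < n"
    then show "is_digraph (qc_order a) (qc_arc a (i + 1))"
      "strongly_connected (qc_order a) (qc_arc a (i + 1))" "\<not> symmetric_dg (qc_arc a (i + 1))"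
      using qc_is_digraph[of "i + 1" a] qc_strongly_connected[of "i + 1" a]
        qc_not_symmetric[of a "i + 1"] p[of i i] a by auto
  next
    fix i j assume "i < n" "j < n" "i \<noteq> j"
    then show "\<not> dg_isomorphic (qc_order a) (qc_arc a (i + 1)) (qc_arc a (j + 1))"
      "integral_strongly_quasi_cospectral (qc_order a) (qc_arc a (i + 1)) (qc_arc a (j + 1))"
      using qc_not_isomorphic[of a "i + 1" "j + 1"]
        qc_integral_strongly_quasi_cospectral[of "i + 1" a "j + 1"] p[of i j] a by auto
  qed
qed

end
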